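(* As $N\to\infty$, $$\mathbf{P}_o\Big[\Big\{\tfrac{Sn}{N^d}<(\sqrt{\log\log n})^{-1}\Big\}\cup\Big\{\tfrac{Sn}{N^d}>\log N\Big\}\Big]\to0.$$
   Context: $d\ge3$. $(Y_t)$ is the lazy simple random walk on $\mathbb{Z}^d$ (stays put with probability $1/2$, otherwise moves to each neighbour with probability $1/(4d)$), $\mathbf{P}_o$ its law started at the origin. $L=mN$ with $m=m(N)$, $N$ integers, $L^2/N^d\to A\in(0,\infty)$ as $N\to\infty$. $n=\lfloor N^\delta\rfloor$ for a fixed $2<\delta<d$. $S=\inf\{\ell\ge0:Y_{n\ell}\notin(-L,L)^d\}$. *)

theory Defs
  imports "HOL-Probability.Probability"
begin

text \<open>Lattice Z^d is represented by the type int^'d, d = CARD('d).\<close>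

definition lazy_step :: "(int ^ 'd::finite) pmf" where
  "lazy_step = bind_pmf (bernoulli_pmf (1/2))
     (\<lambda>b. if b then return_pmf 0
          else pmf_of_set {axis i s | i s. s \<in> {1, -1::int}})"

definition walk_space :: "(int ^ 'd::finite) stream measure" where
  "walk_space = stream_space (measure_pmf lazy_step)"

definition walk_pos :: "nat \<Rightarrow> (int ^ 'd::finite) stream \<Rightarrow> int ^ 'd" where
  "walk_pos t \<omega> = sum_list (stake t \<omega>)"

definition in_box :: "nat \<Rightarrow> int ^ 'd::finite \<Rightarrow> bool" where
  "in_box L x \<longleftrightarrow> (\<forall>i. - int L < x $ i \<and> x $ i < int L)"

definition exit_index :: "nat \<Rightarrow> nat \<Rightarrow> (int ^ 'd::finite) stream \<Rightarrow> enat" where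
  "exit_index n L \<omega> =
     (if \<exists>l. \<not> in_box L (walk_pos (n * l) \<omega>)
      then enat (LEAST l. \<not> in_box L (walk_pos (n * l) \<omega>)) else \<infinity>)"

end

theory Submission
  imports Defs "HOL-Real_Asymp.Real_Asymp"
begin

text \<open>
  Write \<open>S\<close> for the exit index, so that \<open>n S\<close> is the exit time of the walk from
  \<open>(-L, L)\<^sup>d\<close> read off at multiples of \<open>n\<close>, and recall \<open>L\<^sup>2 \<approx> A N\<^sup>d\<close>.

  Early exit: leaving the box by time \<open>T\<close> forces some coordinate to reach distance \<open>L\<close> by
  time \<open>T\<close>. Each coordinate is a martingale with variance \<open>t / (2d)\<close> at time \<open>t\<close>, so a
  Kolmogorov-type maximal inequality and a union bound over the \<open>d\<close> coordinates give
  probability at most \<open>T / (2 L\<^sup>2)\<close>, which is \<open>\<approx> \<epsilon> / (2A) \<rightarrow> 0\<close> for \<open>T = \<epsilon> N\<^sup>d\<close>.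

  Late exit: after \<open>s \<ge> 4 d L\<^sup>2\<close> steps a coordinate has moved by at least \<open>L\<close> with
  probability \<open>\<ge> 1/16\<close> (a Paley-Zygmund argument with its second and fourth moments), and by
  symmetry in the direction away from its start with probability \<open>\<ge> 1/32\<close>; so from any
  point of the box it leaves within \<open>s\<close> steps with probability \<open>\<ge> 1/32\<close>. By the Markov
  property the walk is in the box at times \<open>0, s, \<dots>, k s\<close> with probability
  \<open>\<le> (31/32)\<^sup>k\<close>, and \<open>k \<approx> N\<^sup>d log N / (4 d L\<^sup>2) \<rightarrow> \<infinity>\<close> such blocks fit before time
  \<open>N\<^sup>d log N\<close>.
\<close>

lemma space_walk_space [simp]: "space (walk_space :: (int^'d::finite) stream measure) = UNIV"
  by (simp add: walk_space_def space_stream_space)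

lemma prob_space_walk_space: "prob_space (walk_space :: (int^'d::finite) stream measure)"
  unfolding walk_space_def by (intro prob_space.prob_space_stream_space prob_space_measure_pmf)

lemma emeasure_walk_space_UNIV [simp]: "emeasure (walk_space :: (int^'d::finite) stream measure) UNIV = 1"
  using prob_space.emeasure_space_1[OF prob_space_walk_space] by simp

lemma emeasure_walk_space_eq_measure:
  "emeasure (walk_space :: (int^'d::finite) stream measure) A = ennreal (measure walk_space A)"
proof -
  interpret prob_space "walk_space :: (int^'d) stream measure"
    by (rule prob_space_walk_space)
  show ?thesis
    by (rule emeasure_eq_measure)
qed

lemma sets_walk_space: "sets (walk_space :: (int^'d::finite) stream measure) = sets (stream_space (count_space UNIV))"
  unfolding walk_space_def by (rule sets_stream_space_cong) simp

lemma measurable_walk_pos [measurable]: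
  "walk_pos t \<in> measurable (walk_space :: (int^'d::finite) stream measure) (count_space UNIV)"
  unfolding measurable_cong_sets[OF sets_walk_space refl] walk_pos_def[abs_def]
  by (rule measurable_compose[OF measurable_stake]) simp

lemma pred_walk_pos [measurable]:
  "Measurable.pred (walk_space :: (int^'d::finite) stream measure) (\<lambda>\<omega>. P (walk_pos t \<omega>))"
  by (rule measurable_compose[OF measurable_walk_pos]) simp

lemma sets_walk_space_Collect:
  "Measurable.pred walk_space P \<Longrightarrow> {\<omega>. P \<omega>} \<in> sets (walk_space :: (int^'d::finite) stream measure)"
  by (simp add: pred_def)

lemma walk_pos_0 [simp]: "walk_pos 0 \<omega> = 0"
  by (simp add: walk_pos_def)

lemma walk_pos_Suc_Cons [simp]: "walk_pos (Suc t) (z ## \<omega>) = z + walk_pos t \<omega>"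
  by (simp add: walk_pos_def)

lemma nn_integral_walk_space_Cons:
  assumes "f \<in> borel_measurable (walk_space :: (int^'d::finite) stream measure)"
  shows "(\<integral>\<^sup>+\<omega>. f \<omega> \<partial>walk_space) = (\<integral>\<^sup>+z. \<integral>\<^sup>+\<omega>. f (z ## \<omega>) \<partial>walk_space \<partial>measure_pmf lazy_step)"
  using assms unfolding walk_space_def
  by (rule prob_space.nn_integral_stream_space[OF prob_space_measure_pmf])

lemma emeasure_walk_space_Cons:
  fixes A :: "(int^'d::finite) stream set"
  assumes "A \<in> sets walk_space" and "\<And>z. B z \<in> sets walk_space"
    and "\<And>z \<omega>. z ## \<omega> \<in> A \<longleftrightarrow> \<omega> \<in> B z"
  shows "emeasure walk_space A = (\<integral>\<^sup>+z. emeasure walk_space (B z) \<partial>measure_pmf lazy_step)"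
proof -
  have "emeasure walk_space A = (\<integral>\<^sup>+z. \<integral>\<^sup>+\<omega>. indicator A (z ## \<omega>) \<partial>walk_space \<partial>measure_pmf lazy_step)"
    using assms(1) by (simp add: nn_integral_walk_space_Cons flip: nn_integral_indicator)
  also have "\<dots> = (\<integral>\<^sup>+z. emeasure walk_space (B z) \<partial>measure_pmf lazy_step)"
    using assms(2,3) by (simp add: indicator_def flip: nn_integral_indicator)
  finally show ?thesis .
qed

lemma nn_integral_walk_pos_Suc:
  "(\<integral>\<^sup>+\<omega>. f (walk_pos (Suc t) \<omega>) \<partial>walk_space)
     = (\<integral>\<^sup>+z. \<integral>\<^sup>+\<omega>. f (z + walk_pos t \<omega>) \<partial>walk_space \<partial>measure_pmf lazy_step)"
  for f :: "int^'d::finite \<Rightarrow> ennreal"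
  by (subst nn_integral_walk_space_Cons) simp_all

lemma axis_steps_eq_image:
  "{axis i s | i s. s \<in> {1, -1::int}} = (\<lambda>(i, s). axis i s) ` (UNIV \<times> {1, -1::int})"
  by force

lemma inj_on_axis: "inj_on (\<lambda>(i, s). axis i s :: int^'d::finite) (UNIV \<times> {1, -1})"
  by (auto simp: inj_on_def axis_eq_axis)

lemma nn_integral_lazy_step:
  fixes f :: "int^'d::finite \<Rightarrow> ennreal"
  shows "(\<integral>\<^sup>+z. f z \<partial>measure_pmf lazy_step)
    = f 0 / 2 + (\<Sum>i\<in>UNIV. f (axis i 1) + f (axis i (-1))) / (4 * of_nat CARD('d))"
proof -
  define S :: "(int^'d) set" where "S = {axis i s | i s. s \<in> {1, -1::int}}"
  have fin: "finite S" and ne: "S \<noteq> {}"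
    unfolding S_def axis_steps_eq_image by auto
  have card: "card S = 2 * CARD('d)"
    unfolding S_def axis_steps_eq_image by (simp add: card_image[OF inj_on_axis] card_cartesian_product)
  have sum: "(\<Sum>v\<in>S. f v) = (\<Sum>i\<in>UNIV. f (axis i 1) + f (axis i (-1)))"
    unfolding S_def axis_steps_eq_image sum.reindex[OF inj_on_axis]
    by (simp add: sum.cartesian_product')
  have lazy: "lazy_step = bind_pmf (bernoulli_pmf (1/2)) (\<lambda>b. if b then return_pmf 0 else pmf_of_set S)"
    unfolding lazy_step_def S_def ..
  have "(\<integral>\<^sup>+z. f z \<partial>measure_pmf lazy_step) = f 0 * inverse 2 + (\<Sum>v\<in>S. f v) / of_nat (card S) * inverse 2"
    unfolding lazy nn_integral_bind_pmf by (simp add: nn_integral_pmf_of_set[OF ne fin])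
  also have "\<dots> = f 0 / 2 + (\<Sum>v\<in>S. f v) / (4 * of_nat CARD('d))"
  proof -
    have "inverse (of_nat (2 * CARD('d))) * inverse 2 = (inverse (4 * of_nat CARD('d)) :: ennreal)"
      by (subst ennreal_inverse_mult[symmetric]) (simp_all add: mult_ac ennreal_mult_less_top of_nat_less_top)
    then show ?thesis
      unfolding card divide_ennreal_def by (simp add: mult.assoc)
  qed
  finally show ?thesis unfolding sum .
qed

lemma axis_uminus: "- axis i s = axis i (- s :: 'a::ab_group_add)"
  by (simp add: vec_eq_iff axis_def)

lemma nn_integral_lazy_step_uminus:
  fixes f :: "int^'d::finite \<Rightarrow> ennreal"
  shows "(\<integral>\<^sup>+z. f (- z) \<partial>measure_pmf lazy_step) = (\<integral>\<^sup>+z. f z \<partial>measure_pmf lazy_step)"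
  by (simp add: nn_integral_lazy_step axis_uminus add.commute)

lemma nn_integral_lazy_step_component:
  fixes h :: "int \<Rightarrow> real" and j :: "'d::finite"
  assumes h: "\<And>x. 0 \<le> h x"
  shows "(\<integral>\<^sup>+z. ennreal (h (z $ j)) \<partial>measure_pmf lazy_step)
    = ennreal ((1 - 1 / (2 * CARD('d))) * h 0 + (h 1 + h (-1)) / (4 * CARD('d)))"
proof -
  let ?g = "\<lambda>i. h (axis i 1 $ j) + h (axis i (-1) $ j)"
  have "(\<Sum>i\<in>UNIV. ?g i) = ?g j + (\<Sum>i\<in>UNIV - {j}. ?g i)"
    by (subst sum.remove[of _ j]) simp_all
  also have "\<dots> = h 1 + h (-1) + 2 * (real CARD('d) - 1) * h 0"
    by (simp add: axis_def card_Diff_singleton of_nat_diff)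
  finally have sum: "(\<Sum>i\<in>UNIV. ?g i) = h 1 + h (-1) + 2 * (real CARD('d) - 1) * h 0" .
  have card: "1 \<le> real CARD('d)"
    by simp
  have "(\<Sum>i\<in>UNIV. ennreal (h (axis i 1 $ j)) + ennreal (h (axis i (-1) $ j))) = ennreal (\<Sum>i\<in>UNIV. ?g i)"
    by (simp add: h ennreal_plus sum_ennreal[symmetric])
  then have "(\<integral>\<^sup>+z. ennreal (h (z $ j)) \<partial>measure_pmf lazy_step)
      = ennreal (h 0) / 2 + ennreal (\<Sum>i\<in>UNIV. ?g i) / ennreal (4 * real CARD('d))"
    by (simp add: nn_integral_lazy_step ennreal_of_nat_eq_real_of_nat ennreal_mult)
  also have "\<dots> = ennreal (h 0 / 2 + (\<Sum>i\<in>UNIV. ?g i) / (4 * real CARD('d)))"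
    by (simp add: h sum_nonneg add_nonneg_nonneg ennreal_plus divide_ennreal ennreal_divide_numeral)
  also have "h 0 / 2 + (\<Sum>i\<in>UNIV. ?g i) / (4 * real CARD('d))
      = (1 - 1 / (2 * CARD('d))) * h 0 + (h 1 + h (-1)) / (4 * CARD('d))"
    unfolding sum using card by (simp add: field_simps)
  finally show ?thesis .
qed

section \<open>Symmetry and moments of a coordinate\<close>

lemma nn_integral_walk_pos_uminus:
  fixes f :: "int^'d::finite \<Rightarrow> ennreal"
  shows "(\<integral>\<^sup>+\<omega>. f (- walk_pos t \<omega>) \<partial>walk_space) = (\<integral>\<^sup>+\<omega>. f (walk_pos t \<omega>) \<partial>walk_space)"
proof (induction t arbitrary: f)
  case (Suc t)
  have "(\<integral>\<^sup>+\<omega>. f (- walk_pos (Suc t) \<omega>) \<partial>walk_space)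
      = (\<integral>\<^sup>+z. \<integral>\<^sup>+\<omega>. f (- z + - walk_pos t \<omega>) \<partial>walk_space \<partial>measure_pmf lazy_step)"
    using nn_integral_walk_pos_Suc[of "\<lambda>v. f (- v)" t] by simp
  also have "\<dots> = (\<integral>\<^sup>+z. \<integral>\<^sup>+\<omega>. f (- z + walk_pos t \<omega>) \<partial>walk_space \<partial>measure_pmf lazy_step)"
    using Suc.IH[of "\<lambda>v. f (_ + v)"] by simp
  also have "\<dots> = (\<integral>\<^sup>+z. \<integral>\<^sup>+\<omega>. f (z + walk_pos t \<omega>) \<partial>walk_space \<partial>measure_pmf lazy_step)"
    by (rule nn_integral_lazy_step_uminus)
  finally show ?case
    by (simp only: nn_integral_walk_pos_Suc)
qed simp

lemma emeasure_walk_pos_uminus: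
  "emeasure walk_space {\<omega>. P (- walk_pos t \<omega>)}
    = emeasure (walk_space :: (int^'d::finite) stream measure) {\<omega>. P (walk_pos t \<omega>)}"
proof -
  have indicator: "emeasure walk_space {\<omega>. P (g (walk_pos t \<omega>))}
      = (\<integral>\<^sup>+\<omega>. indicator {v. P v} (g (walk_pos t \<omega>)) \<partial>(walk_space :: (int^'d) stream measure))" for g
    by (subst nn_integral_indicator[symmetric])
      (auto intro: sets_walk_space_Collect intro!: nn_integral_cong simp: indicator_def)
  show ?thesis
    using indicator[of uminus] indicator[of id] nn_integral_walk_pos_uminus[of "indicator {v. P v}" t]
    by simp
qed

lemma nn_integral_walk_component_square:
  fixes i :: "'d::finite"
  shows "(\<integral>\<^sup>+\<omega>. ennreal ((a + real_of_int (walk_pos t \<omega> $ i))\<^sup>2) \<partial>walk_space)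
    = ennreal (a\<^sup>2 + real t / (2 * CARD('d)))"
proof (induction t arbitrary: a)
  case (Suc t)
  have "(\<integral>\<^sup>+\<omega>. ennreal ((a + real_of_int (walk_pos (Suc t) \<omega> $ i))\<^sup>2) \<partial>walk_space)
      = (\<integral>\<^sup>+z. ennreal ((a + real_of_int (z $ i))\<^sup>2 + real t / (2 * CARD('d))) \<partial>measure_pmf lazy_step)"
    by (subst nn_integral_walk_pos_Suc) (simp add: add.assoc Suc.IH[of "a + _", simplified add.assoc])
  also have "\<dots> = ennreal (a\<^sup>2 + real (Suc t) / (2 * CARD('d)))"
    by (subst nn_integral_lazy_step_component)
      (simp, rule arg_cong[where f = ennreal], simp add: field_simps power2_eq_square)
  finally show ?case .
qed simp

lemma nn_integral_walk_component_power4: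
  fixes i :: "'d::finite"
  defines "v \<equiv> 1 / (2 * real CARD('d))"
  shows "(\<integral>\<^sup>+\<omega>. ennreal ((a + real_of_int (walk_pos t \<omega> $ i)) ^ 4) \<partial>walk_space)
    = ennreal (a ^ 4 + 6 * a\<^sup>2 * (t * v) + t * v + 3 * t * (real t - 1) * v\<^sup>2)"
proof (induction t arbitrary: a)
  case (Suc t)
  define F where "F x = (a + real_of_int x) ^ 4 + 6 * (a + real_of_int x)\<^sup>2 * (t * v) + t * v
    + 3 * real t * (real t - 1) * v\<^sup>2" for x
  have "0 \<le> F x" for x
    unfolding F_def v_def by (cases t) (simp_all add: add_nonneg_nonneg)
  have "(\<integral>\<^sup>+\<omega>. ennreal ((a + real_of_int (walk_pos (Suc t) \<omega> $ i)) ^ 4) \<partial>walk_space)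
      = (\<integral>\<^sup>+z. ennreal (F (z $ i)) \<partial>measure_pmf lazy_step)"
    by (subst nn_integral_walk_pos_Suc) (simp add: F_def add.assoc Suc.IH[of "a + _", simplified add.assoc])
  also have "\<dots> = ennreal ((1 - 1 / (2 * CARD('d))) * F 0 + (F 1 + F (-1)) / (4 * CARD('d)))"
    by (rule nn_integral_lazy_step_component) fact
  also have "\<dots> = ennreal (a ^ 4 + 6 * a\<^sup>2 * (real (Suc t) * v) + real (Suc t) * v + 3 * real (Suc t) * (real (Suc t) - 1) * v\<^sup>2)"
    unfolding F_def v_def
    by (rule arg_cong[where f = ennreal]) (simp add: field_simps power2_eq_square power4_eq_xxxx)
  finally show ?case .
qed simp

section \<open>Maximal inequality\<close>

lemma ex_le_Suc_conv: "(\<exists>k\<le>Suc n. P k) \<longleftrightarrow> P 0 \<or> (\<exists>k\<le>n. P (Suc k))"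
  using Ex_less_Suc2[of "Suc n" P] by (simp add: less_Suc_eq_le)

lemma all_le_Suc_conv: "(\<forall>k\<le>Suc n. P k) \<longleftrightarrow> P 0 \<and> (\<forall>k\<le>n. P (Suc k))"
  using All_less_Suc2[of "Suc n" P] by (simp add: less_Suc_eq_le)

lemma emeasure_walk_component_maximal_le:
  fixes i :: "'d::finite" and L a :: real
  assumes L: "0 < L"
  shows "emeasure walk_space {\<omega>. \<exists>k\<le>T. L \<le> \<bar>a + real_of_int (walk_pos k \<omega> $ i)\<bar>}
    \<le> ennreal ((a\<^sup>2 + real T / (2 * CARD('d))) / L\<^sup>2)"
proof -
  define E :: "nat \<Rightarrow> real \<Rightarrow> (int^'d) stream set"
    where "E T a = {\<omega>. \<exists>k\<le>T. L \<le> \<bar>a + real_of_int (walk_pos k \<omega> $ i)\<bar>}" for T a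
  have E_sets: "E T a \<in> sets walk_space" for T a
    unfolding E_def by (rule sets_walk_space_Collect) measurable
  have already_out: "emeasure walk_space (E T a) \<le> ennreal ((a\<^sup>2 + real T / (2 * CARD('d))) / L\<^sup>2)"
    if "L \<le> \<bar>a\<bar>" for T a
  proof -
    have "L\<^sup>2 \<le> a\<^sup>2 + real T / (2 * CARD('d))"
      using that L abs_le_square_iff[of L a] by (simp add: add_increasing2)
    then have "1 \<le> ennreal ((a\<^sup>2 + real T / (2 * CARD('d))) / L\<^sup>2)"
      using L by (simp flip: ennreal_1)
    then show ?thesis
      using prob_space.emeasure_le_1[OF prob_space_walk_space] order_trans by blast
  qed
  \<comment> \<open>The bound is the second moment of \<open>a + W\<^sub>T\<close> over \<open>L\<^sup>2\<close>, so conditioning on the first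
    step reproduces it, and it exceeds \<open>1\<close> once the walk is already out.\<close>
  have "emeasure walk_space (E T a) \<le> ennreal ((a\<^sup>2 + real T / (2 * CARD('d))) / L\<^sup>2)" for T a
  proof (induction T arbitrary: a)
    case 0
    show ?case
    proof (cases "L \<le> \<bar>a\<bar>")
      case False
      then show ?thesis by (simp add: E_def)
    qed (rule already_out)
  next
    case (Suc T)
    show ?case
    proof (cases "L \<le> \<bar>a\<bar>")
      case False
      define F where "F x = ((a + real_of_int x)\<^sup>2 + real T / (2 * CARD('d))) / L\<^sup>2" for x
      have "emeasure walk_space (E (Suc T) a)
          = (\<integral>\<^sup>+z. emeasure walk_space (E T (a + real_of_int (z $ i))) \<partial>measure_pmf lazy_step)"
        by (rule emeasure_walk_space_Cons[OF E_sets E_sets])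
          (use False in \<open>simp add: E_def ex_le_Suc_conv add.assoc\<close>)
      also have "\<dots> \<le> (\<integral>\<^sup>+z. ennreal (F (z $ i)) \<partial>measure_pmf lazy_step)"
        unfolding F_def by (intro nn_integral_mono Suc.IH)
      also have "\<dots> = ennreal ((1 - 1 / (2 * CARD('d))) * F 0 + (F 1 + F (-1)) / (4 * CARD('d)))"
        by (rule nn_integral_lazy_step_component) (simp add: F_def)
      also have "\<dots> = ennreal ((a\<^sup>2 + real (Suc T) / (2 * CARD('d))) / L\<^sup>2)"
        unfolding F_def
        by (rule arg_cong[where f = ennreal]) (use L in \<open>simp add: field_simps power2_eq_square\<close>)
      finally show ?thesis .
    qed (rule already_out)
  qed
  then show ?thesis
    unfolding E_def .
qed

section \<open>Leaving the box after many steps\<close>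

lemma power2_le_threshold_split:
  fixes w L m :: real
  assumes m: "0 < m"
  shows "w\<^sup>2 \<le> L\<^sup>2 + w ^ 4 / (16 * m) + (if L \<le> \<bar>w\<bar> then 4 * m else 0)"
proof (cases "L \<le> \<bar>w\<bar>")
  case True
  \<comment> \<open>AM-GM\<close>
  have "16 * m * w\<^sup>2 \<le> w ^ 4 + 64 * m\<^sup>2"
    using sum_squares_ge_zero[of 0 "w\<^sup>2 - 8 * m"] by (simp add: power2_eq_square power4_eq_xxxx algebra_simps)
  then have "w\<^sup>2 \<le> w ^ 4 / (16 * m) + 4 * m"
    using m by (simp add: field_simps power2_eq_square)
  with True show ?thesis
    by (simp add: add.assoc add_increasing)
next
  case False
  then have "\<bar>w\<bar> \<le> \<bar>L\<bar>"
    by simp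
  then have "w\<^sup>2 \<le> L\<^sup>2"
    by (simp add: abs_le_square_iff)
  moreover have "0 \<le> w ^ 4 / (16 * m)"
    using m by simp
  ultimately show ?thesis
    using False by simp
qed

lemma (in prob_space) prob_abs_ge_of_moments:
  fixes W :: "'a \<Rightarrow> real" and m L :: real
  assumes W [measurable]: "W \<in> borel_measurable M"
    and second: "(\<integral>\<^sup>+x. ennreal ((W x)\<^sup>2) \<partial>M) = ennreal m"
    and fourth: "(\<integral>\<^sup>+x. ennreal ((W x) ^ 4) \<partial>M) \<le> ennreal (4 * m\<^sup>2)"
    and m: "0 < m" and L: "2 * L\<^sup>2 \<le> m"
  shows "1 / 16 \<le> prob {x \<in> space M. L \<le> \<bar>W x\<bar>}"
proof -
  define A where "A = {x \<in> space M. L \<le> \<bar>W x\<bar>}"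
  have A [measurable]: "A \<in> events"
    unfolding A_def by measurable
  have int2: "integrable M (\<lambda>x. (W x)\<^sup>2)"
    by (rule integrableI_nonneg) (simp_all add: second)
  have int4: "integrable M (\<lambda>x. (W x) ^ 4)"
    by (rule integrableI_nonneg) (use fourth in \<open>simp_all add: le_less_trans\<close>)
  have E2: "expectation (\<lambda>x. (W x)\<^sup>2) = m"
    using m by (simp add: integral_eq_nn_integral second)
  have E4: "expectation (\<lambda>x. (W x) ^ 4) \<le> 4 * m\<^sup>2"
    using fourth by (simp add: integral_eq_nn_integral enn2real_leI)
  have "(W x)\<^sup>2 \<le> L\<^sup>2 + (W x) ^ 4 / (16 * m) + 4 * m * indicator A x" if "x \<in> space M" for x
    using power2_le_threshold_split[OF m, of "W x" L] that
    by (simp add: A_def indicator_def split: if_splits)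
  then have "m \<le> expectation (\<lambda>x. L\<^sup>2 + (W x) ^ 4 / (16 * m) + 4 * m * indicator A x)"
    unfolding E2[symmetric] using int4 A
    by (intro integral_mono int2) (auto simp: emeasure_eq_measure)
  also have "\<dots> = L\<^sup>2 + expectation (\<lambda>x. (W x) ^ 4) / (16 * m) + 4 * m * prob A"
    using int4 A by (simp add: emeasure_eq_measure prob_space)
  also have "\<dots> \<le> m / 2 + m / 4 + 4 * m * prob A"
  proof -
    have "expectation (\<lambda>x. (W x) ^ 4) / (16 * m) \<le> m / 4"
      using E4 m by (simp add: field_simps power2_eq_square)
    then show ?thesis
      using L by simp
  qed
  finally show ?thesis
    using m by (simp add: A_def field_simps)
qed

lemma prob_walk_component_abs_ge:
  fixes i :: "'d::finite" and L :: real
  assumes s: "1 \<le> real s / (2 * CARD('d))" and L: "2 * L\<^sup>2 \<le> real s / (2 * CARD('d))"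
  shows "1 / 16 \<le> measure walk_space {\<omega>. L \<le> \<bar>real_of_int (walk_pos s \<omega> $ i)\<bar>}"
proof -
  interpret prob_space "walk_space :: (int^'d) stream measure"
    by (rule prob_space_walk_space)
  define m where "m = real s / (2 * CARD('d))"
  have "real s * (real s - 1) * (1 / (2 * real CARD('d)))\<^sup>2 \<le> m\<^sup>2"
    by (simp add: m_def power2_eq_square field_simps mult_left_mono)
  moreover have "m \<le> m\<^sup>2"
    using mult_left_mono[OF s, of m] s by (simp add: m_def power2_eq_square)
  ultimately have "(\<integral>\<^sup>+\<omega>. ennreal ((real_of_int (walk_pos s \<omega> $ i)) ^ 4) \<partial>walk_space) \<le> ennreal (4 * m\<^sup>2)"
    using nn_integral_walk_component_power4[of 0 s i] by (simp add: m_def ennreal_leI)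
  moreover have "(\<integral>\<^sup>+\<omega>. ennreal ((real_of_int (walk_pos s \<omega> $ i))\<^sup>2) \<partial>walk_space) = ennreal m"
    using nn_integral_walk_component_square[of 0 s i] by (simp add: m_def)
  ultimately show ?thesis
    using prob_abs_ge_of_moments[of "\<lambda>\<omega>. real_of_int (walk_pos s \<omega> $ i)" m L] s L
    by (simp add: m_def)
qed

lemma prob_walk_component_stays_le:
  fixes i :: "'d::finite" and L :: real and x :: "int^'d"
  assumes s: "1 \<le> real s / (2 * CARD('d))" and L: "2 * L\<^sup>2 \<le> real s / (2 * CARD('d))"
    and x: "\<bar>real_of_int (x $ i)\<bar> < L"
  shows "measure walk_space {\<omega>. \<bar>real_of_int ((x + walk_pos s \<omega>) $ i)\<bar> < L} \<le> 31 / 32"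
proof -
  interpret prob_space "walk_space :: (int^'d) stream measure"
    by (rule prob_space_walk_space)
  define up :: "(int^'d) stream set" where "up = {\<omega>. L \<le> real_of_int (walk_pos s \<omega> $ i)}"
  define down :: "(int^'d) stream set" where "down = {\<omega>. real_of_int (walk_pos s \<omega> $ i) \<le> - L}"
  have [measurable]: "up \<in> events" "down \<in> events"
    unfolding up_def down_def by (auto intro: sets_walk_space_Collect)
  have "{\<omega>. L \<le> \<bar>real_of_int (walk_pos s \<omega> $ i)\<bar>} = up \<union> down"
    by (auto simp: up_def down_def)
  with prob_walk_component_abs_ge[OF s L, of i] have "1 / 16 \<le> prob (up \<union> down)"
    by simp
  also have "\<dots> \<le> prob up + prob down"
    by (rule measure_Un_le) simp_all
  also have symmetric: "prob down = prob up"
    using emeasure_walk_pos_uminus[of "\<lambda>v. L \<le> real_of_int (v $ i)" s]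
    by (simp add: up_def down_def emeasure_eq_measure le_minus_iff)
  finally have up: "1 / 32 \<le> prob up"
    by simp
  with symmetric have down: "1 / 32 \<le> prob down"
    by simp
  let ?stay = "{\<omega>. \<bar>real_of_int ((x + walk_pos s \<omega>) $ i)\<bar> < L}"
  show ?thesis
  proof (cases "0 \<le> x $ i")
    case True
    with x have "?stay \<subseteq> space walk_space - up"
      by (auto simp: up_def)
    then have "prob ?stay \<le> prob (space walk_space - up)"
      by (rule finite_measure_mono[OF _ sets.compl_sets]) simp_all
    with up prob_compl[of up] show ?thesis
      by simp
  next
    case False
    with x have "?stay \<subseteq> space walk_space - down"
      by (auto simp: down_def)
    then have "prob ?stay \<le> prob (space walk_space - down)"
      by (rule finite_measure_mono[OF _ sets.compl_sets]) simp_all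
    with down prob_compl[of down] show ?thesis
      by simp
  qed
qed

lemma in_box_iff_abs: "in_box L x \<longleftrightarrow> (\<forall>i. \<bar>real_of_int (x $ i)\<bar> < real L)"
proof -
  have "\<bar>real_of_int a\<bar> < real L \<longleftrightarrow> - int L < a \<and> a < int L" for a
    by linarith
  then show ?thesis
    by (simp add: in_box_def)
qed

lemma prob_walk_stays_in_box_le:
  fixes x :: "int^'d::finite"
  assumes L: "0 < L" and s: "4 * CARD('d) * L\<^sup>2 \<le> s" and x: "in_box L x"
  shows "measure walk_space {\<omega>. in_box L (x + walk_pos s \<omega>)} \<le> 31 / 32"
proof -
  interpret prob_space "walk_space :: (int^'d) stream measure"
    by (rule prob_space_walk_space)
  let ?i = "undefined :: 'd" \<comment> \<open>any coordinate will do\<close>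
  have L2: "2 * (real L)\<^sup>2 \<le> real s / (2 * CARD('d))"
    using of_nat_mono[OF s] by (simp add: field_simps)
  moreover have "1 \<le> (real L)\<^sup>2"
    using L by (intro one_le_power) simp
  ultimately have "1 \<le> real s / (2 * CARD('d))"
    by linarith
  moreover have "\<bar>real_of_int (x $ ?i)\<bar> < real L"
    using x by (simp add: in_box_iff_abs)
  moreover have "{\<omega>. in_box L (x + walk_pos s \<omega>)} \<subseteq> {\<omega>. \<bar>real_of_int ((x + walk_pos s \<omega>) $ ?i)\<bar> < real L}"
    by (auto simp: in_box_iff_abs simp del: vector_add_component)
  then have "prob {\<omega>. in_box L (x + walk_pos s \<omega>)} \<le> prob {\<omega>. \<bar>real_of_int ((x + walk_pos s \<omega>) $ ?i)\<bar> < real L}"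
    by (rule finite_measure_mono) (auto intro: sets_walk_space_Collect)
  ultimately show ?thesis
    using prob_walk_component_stays_le[OF _ L2] by fastforce
qed

lemma emeasure_walk_in_box_at_multiples_le:
  fixes x :: "int^'d::finite"
  assumes L: "0 < L" and s: "4 * CARD('d) * L\<^sup>2 \<le> s"
  shows "emeasure walk_space {\<omega>. \<forall>q\<le>j. in_box L (x + walk_pos (t + q * s) \<omega>)}
    \<le> ennreal ((31 / 32) ^ j) * emeasure walk_space {\<omega>. in_box L (x + walk_pos t \<omega>)}"
proof (induction j arbitrary: t x)
  case 0
  show ?case
    by simp
next
  case (Suc j)
  \<comment> \<open>Shift the start to time \<open>0\<close>; there the induction hypothesis applies after one block of \<open>s\<close> steps.\<close>
  show ?case
  proof (induction t arbitrary: x)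
    case 0
    show ?case
    proof (cases "in_box L x")
      case True
      have "emeasure walk_space {\<omega>. \<forall>q\<le>Suc j. in_box L (x + walk_pos (0 + q * s) \<omega>)}
          = emeasure walk_space {\<omega>. \<forall>q\<le>j. in_box L (x + walk_pos (s + q * s) \<omega>)}"
        using True by (simp add: all_le_Suc_conv)
      also have "\<dots> \<le> ennreal ((31 / 32) ^ j) * emeasure walk_space {\<omega>. in_box L (x + walk_pos s \<omega>)}"
        by (rule Suc.IH)
      also have "\<dots> \<le> ennreal ((31 / 32) ^ j) * ennreal (31 / 32)"
        using prob_walk_stays_in_box_le[OF L s True]
        by (intro mult_left_mono) (simp_all add: emeasure_walk_space_eq_measure)
      also have "\<dots> = ennreal ((31 / 32) ^ Suc j) * emeasure walk_space {\<omega>. in_box L (x + walk_pos 0 \<omega>)}"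
        using True by (simp add: ennreal_mult[symmetric] mult.commute)
      finally show ?thesis .
    qed (simp add: all_le_Suc_conv)
  next
    case (Suc t)
    have "emeasure walk_space {\<omega>. \<forall>q\<le>Suc j. in_box L (x + walk_pos (Suc t + q * s) \<omega>)}
        = (\<integral>\<^sup>+z. emeasure walk_space {\<omega>. \<forall>q\<le>Suc j. in_box L ((x + z) + walk_pos (t + q * s) \<omega>)}
            \<partial>measure_pmf lazy_step)"
      by (rule emeasure_walk_space_Cons) (auto intro!: sets_walk_space_Collect simp: add.assoc)
    also have "\<dots> \<le> (\<integral>\<^sup>+z. ennreal ((31 / 32) ^ Suc j) * emeasure walk_space {\<omega>. in_box L ((x + z) + walk_pos t \<omega>)}
            \<partial>measure_pmf lazy_step)"
      by (intro nn_integral_mono Suc.IH)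
    also have "\<dots> = ennreal ((31 / 32) ^ Suc j) * emeasure walk_space {\<omega>. in_box L (x + walk_pos (Suc t) \<omega>)}"
      by (subst emeasure_walk_space_Cons[where B = "\<lambda>z. {\<omega>. in_box L ((x + z) + walk_pos t \<omega>)}"])
        (auto intro!: sets_walk_space_Collect simp: add.assoc nn_integral_cmult)
    finally show ?case .
  qed
qed

lemma enat_less_exit_index_iff:
  "enat l < exit_index n L \<omega> \<longleftrightarrow> (\<forall>l'\<le>l. in_box L (walk_pos (n * l') \<omega>))"
proof
  assume "enat l < exit_index n L \<omega>"
  then show "\<forall>l'\<le>l. in_box L (walk_pos (n * l') \<omega>)"
    using not_less_Least[of _ "\<lambda>l. \<not> in_box L (walk_pos (n * l) \<omega>)"]
    by (auto simp: exit_index_def split: if_splits)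
next
  assume "\<forall>l'\<le>l. in_box L (walk_pos (n * l') \<omega>)"
  then show "enat l < exit_index n L \<omega>"
    using LeastI_ex[of "\<lambda>l. \<not> in_box L (walk_pos (n * l) \<omega>)"]
    by (auto simp: exit_index_def not_less[symmetric])
qed

lemma pred_enat_less_exit_index [measurable]:
  "Measurable.pred (walk_space :: (int^'d::finite) stream measure) (\<lambda>\<omega>. enat l < exit_index n L \<omega>)"
  unfolding enat_less_exit_index_iff by measurable

lemma prob_exit_index_le_enat:
  assumes L: "0 < L"
  shows "measure (walk_space :: (int^'d::finite) stream measure)
      {\<omega>. exit_index n L \<omega> \<le> enat l} \<le> real (n * l) / (2 * (real L)\<^sup>2)"
proof -
  interpret prob_space "walk_space :: (int^'d) stream measure"
    by (rule prob_space_walk_space)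
  define B :: "'d \<Rightarrow> (int^'d) stream set"
    where "B i = {\<omega>. \<exists>k\<le>n * l. real L \<le> \<bar>0 + real_of_int (walk_pos k \<omega> $ i)\<bar>}" for i
  have B [measurable]: "B i \<in> events" for i
    unfolding B_def by (rule sets_walk_space_Collect) measurable
  have "{\<omega> :: (int^'d) stream. exit_index n L \<omega> \<le> enat l} \<subseteq> (\<Union>i. B i)"
  proof
    fix \<omega> :: "(int^'d) stream"
    assume "\<omega> \<in> {\<omega>. exit_index n L \<omega> \<le> enat l}"
    then obtain l' i where "l' \<le> l" and "real L \<le> \<bar>real_of_int (walk_pos (n * l') \<omega> $ i)\<bar>"
      by (auto simp: in_box_iff_abs not_less[symmetric] enat_less_exit_index_iff)
    then show "\<omega> \<in> (\<Union>i. B i)"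
      unfolding B_def by (auto intro!: exI[of _ "n * l'"])
  qed
  then have "prob {\<omega>. exit_index n L \<omega> \<le> enat l} \<le> prob (\<Union>i. B i)"
    by (rule finite_measure_mono) simp
  also have "\<dots> \<le> (\<Sum>i\<in>UNIV. prob (B i))"
    by (rule finite_measure_subadditive_finite) auto
  also have "\<dots> \<le> (\<Sum>i\<in>(UNIV :: 'd set). real (n * l) / (2 * CARD('d)) / (real L)\<^sup>2)"
  proof (rule sum_mono)
    fix i
    show "prob (B i) \<le> real (n * l) / (2 * CARD('d)) / (real L)\<^sup>2"
      using emeasure_walk_component_maximal_le[where L = "real L" and a = 0 and T = "n * l" and i = i] L
      by (simp add: B_def emeasure_eq_measure)
  qed
  also have "\<dots> = real (n * l) / (2 * (real L)\<^sup>2)"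
    by simp
  finally show ?thesis .
qed

lemma prob_enat_less_exit_index:
  assumes L: "0 < L" and r: "4 * CARD('d) * L\<^sup>2 \<le> n * r"
  shows "measure (walk_space :: (int^'d::finite) stream measure)
      {\<omega>. enat (k * r) < exit_index n L \<omega>} \<le> (31 / 32) ^ k"
proof -
  have "{\<omega> :: (int^'d) stream. enat (k * r) < exit_index n L \<omega>}
      \<subseteq> {\<omega> :: (int^'d) stream. \<forall>q\<le>k. in_box L (0 + walk_pos (0 + q * (n * r)) \<omega>)}"
  proof (intro subsetI CollectI allI impI)
    fix \<omega> q
    assume "\<omega> \<in> {\<omega>. enat (k * r) < exit_index n L \<omega>}" and "q \<le> k"
    then have "in_box L (walk_pos (n * (q * r)) \<omega>)"
      by (simp add: enat_less_exit_index_iff)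
    then show "in_box L (0 + walk_pos (0 + q * (n * r)) \<omega>)"
      by (simp add: mult.left_commute)
  qed
  then have "emeasure walk_space {\<omega> :: (int^'d) stream. enat (k * r) < exit_index n L \<omega>}
      \<le> emeasure walk_space {\<omega> :: (int^'d) stream. \<forall>q\<le>k. in_box L (0 + walk_pos (0 + q * (n * r)) \<omega>)}"
    by (rule emeasure_mono) (rule sets_walk_space_Collect, measurable)
  also have "\<dots> \<le> ennreal ((31 / 32) ^ k) * emeasure walk_space {\<omega> :: (int^'d) stream. in_box L (0 + walk_pos 0 \<omega>)}"
    by (rule emeasure_walk_in_box_at_multiples_le[OF L r])
  also have "\<dots> = ennreal ((31 / 32) ^ k)"
    using L by (simp add: in_box_def)
  finally show ?thesis
    by (simp add: emeasure_walk_space_eq_measure)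
qed

lemma enat_scaled_outside_cases:
  fixes S :: enat and c e b :: real
  assumes c: "0 < c" and k: "real k \<le> b / c"
    and S: "ereal_of_enat S * ereal c < ereal e \<or> ereal_of_enat S * ereal c > ereal b"
  shows "S \<le> enat (nat \<lfloor>e / c\<rfloor>) \<or> enat k < S"
proof (cases S)
  case (enat l)
  show ?thesis
  proof (cases "real l * c < e")
    case True
    then have "l \<le> nat \<lfloor>e / c\<rfloor>"
      using c by (simp add: field_simps le_nat_floor)
    with enat show ?thesis
      by simp
  next
    case False
    with S enat c have "b / c < real l"
      by (simp add: field_simps)
    with k have "k < l"
      by simp
    with enat show ?thesis
      by simp
  qed
qed simp

lemma prob_exit_index_scaled_outside_le:
  fixes n L r k :: nat and c e b :: real
  assumes L: "0 < L" and c: "0 < c" and e: "0 \<le> e"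
    and r: "4 * CARD('d) * L\<^sup>2 \<le> n * r" and k: "real (k * r) \<le> b / c"
  shows "measure (walk_space :: (int^'d::finite) stream measure)
      {\<omega> \<in> space walk_space. ereal_of_enat (exit_index n L \<omega>) * ereal c < ereal e
        \<or> ereal_of_enat (exit_index n L \<omega>) * ereal c > ereal b}
    \<le> n * e / (2 * c * (real L)\<^sup>2) + (31 / 32) ^ k"
proof -
  interpret prob_space "walk_space :: (int^'d) stream measure"
    by (rule prob_space_walk_space)
  define l where "l = nat \<lfloor>e / c\<rfloor>"
  let ?early = "{\<omega> :: (int^'d) stream. exit_index n L \<omega> \<le> enat l}"
  let ?late = "{\<omega> :: (int^'d) stream. enat (k * r) < exit_index n L \<omega>}"
  have "\<omega> \<in> ?early \<union> ?late"
    if "ereal_of_enat (exit_index n L \<omega>) * ereal c < ereal e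
        \<or> ereal_of_enat (exit_index n L \<omega>) * ereal c > ereal b" for \<omega>
    using enat_scaled_outside_cases[OF c k that] by (simp add: l_def)
  moreover have [measurable]: "?early \<in> events" "?late \<in> events"
    unfolding not_less[symmetric] by (rule sets_walk_space_Collect, measurable)+
  ultimately have "prob {\<omega> \<in> space walk_space. ereal_of_enat (exit_index n L \<omega>) * ereal c < ereal e
        \<or> ereal_of_enat (exit_index n L \<omega>) * ereal c > ereal b} \<le> prob (?early \<union> ?late)"
    by (intro finite_measure_mono) auto
  also have "\<dots> \<le> prob ?early + prob ?late"
    by (rule measure_Un_le) simp_all
  also have "\<dots> \<le> real (n * l) / (2 * (real L)\<^sup>2) + (31 / 32) ^ k"
    using prob_exit_index_le_enat[OF L, of n l] prob_enat_less_exit_index[OF L r, of k]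
    by (rule add_mono)
  also have "real (n * l) / (2 * (real L)\<^sup>2) \<le> n * e / (2 * c * (real L)\<^sup>2)"
  proof -
    have "real l \<le> e / c"
      unfolding l_def using c e by simp
    then have "real (n * l) \<le> n * (e / c)"
      unfolding of_nat_mult by (rule mult_left_mono) simp
    then show ?thesis
      using L c by (simp add: field_simps divide_right_mono)
  qed
  finally show ?thesis
    by simp
qed

section \<open>Asymptotics\<close>

lemma nat_floor_div_nat_ceiling_ge:
  fixes x y :: real
  assumes y: "0 < y"
  shows "(x - 1) / (y + 1) - 1 \<le> real (nat \<lfloor>x\<rfloor> div nat \<lceil>y\<rceil>)"
proof (cases "1 \<le> x")
  case True
  define r where "r = nat \<lceil>y\<rceil>"
  have r: "0 < real r" "real r \<le> y + 1"
    using y by (simp_all add: r_def)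
  have "(x - 1) / (y + 1) \<le> (x - 1) / real r"
    using True r by (intro divide_left_mono) auto
  also have "\<dots> \<le> real (nat \<lfloor>x\<rfloor>) / real r"
    using True r by (intro divide_right_mono) linarith+
  also have "\<dots> < real_of_int \<lfloor>real (nat \<lfloor>x\<rfloor>) / real r\<rfloor> + 1"
    by linarith
  finally show ?thesis
    unfolding floor_divide_of_nat_eq r_def by simp
next
  case False
  then have "(x - 1) / (y + 1) - 1 < 0"
    using y by (simp add: divide_neg_pos)
  then show ?thesis
    by linarith
qed

lemma prob_exit_index_scaled_outside_le_blocks:
  fixes n L :: nat and s e b :: real
  assumes n: "0 < n" and L: "0 < L" and s: "0 < s" and e: "0 \<le> e" and b: "0 \<le> b"
  shows "measure (walk_space :: (int^'d::finite) stream measure)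
      {\<omega> \<in> space walk_space. ereal_of_enat (exit_index n L \<omega>) * ereal (real n / s) < ereal e
        \<or> ereal_of_enat (exit_index n L \<omega>) * ereal (real n / s) > ereal b}
    \<le> e / (2 * (real L ^ 2 / s))
      + (31 / 32) ^ (nat \<lfloor>b / (real n / s)\<rfloor> div nat \<lceil>4 * real CARD('d) * real L ^ 2 / real n\<rceil>)"
proof -
  define r where "r = nat \<lceil>4 * real CARD('d) * real L ^ 2 / real n\<rceil>"
  define k where "k = nat \<lfloor>b / (real n / s)\<rfloor> div r"
  have "4 * real CARD('d) * real L ^ 2 / real n \<le> real r"
    unfolding r_def by linarith
  then have "real (4 * CARD('d) * L ^ 2) \<le> real (n * r)"
    using n by (simp add: field_simps)
  then have r: "4 * CARD('d) * L ^ 2 \<le> n * r"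
    by (simp only: of_nat_le_iff)
  have "real (k * r) \<le> real (nat \<lfloor>b / (real n / s)\<rfloor>)"
    unfolding k_def of_nat_le_iff by (rule div_times_less_eq_dividend)
  also have "\<dots> \<le> b / (real n / s)"
    using n s b by simp
  finally have k: "real (k * r) \<le> b / (real n / s)" .
  have "real n * e / (2 * (real n / s) * real L ^ 2) = e / (2 * (real L ^ 2 / s))"
    using n s by (simp add: field_simps)
  with prob_exit_index_scaled_outside_le[OF L _ e r k] n s show ?thesis
    by (simp add: k_def r_def)
qed

lemma filterlim_exit_blocks_at_top:
  fixes n L :: "nat \<Rightarrow> nat" and s b :: "nat \<Rightarrow> real" and D A :: real
  assumes q: "(\<lambda>N. real (L N) ^ 2 / s N) \<longlonglongrightarrow> A" and A: "0 < A" and D: "0 < D"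
    and c: "(\<lambda>N. real (n N) / s N) \<longlonglongrightarrow> 0" and b: "filterlim b at_top sequentially"
    and pos: "\<forall>\<^sub>F N in sequentially. 0 < n N \<and> 0 < s N"
  shows "filterlim (\<lambda>N. nat \<lfloor>b N / (real (n N) / s N)\<rfloor> div nat \<lceil>D * real (L N) ^ 2 / real (n N)\<rceil>)
    at_top sequentially"
proof -
  define g where "g N = (b N - real (n N) / s N) / (D * (real (L N) ^ 2 / s N) + real (n N) / s N)" for N
  have inv: "(\<lambda>N. inverse (D * (real (L N) ^ 2 / s N) + real (n N) / s N)) \<longlonglongrightarrow> inverse (D * A + 0)"
    using A D by (intro tendsto_intros q c) simp
  have diff: "filterlim (\<lambda>N. - (real (n N) / s N) + b N) at_top sequentially"
    by (rule filterlim_tendsto_add_at_top[OF tendsto_minus[OF c] b])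
  have "filterlim (\<lambda>N. inverse (D * (real (L N) ^ 2 / s N) + real (n N) / s N)
      * (- (real (n N) / s N) + b N)) at_top sequentially"
    by (rule filterlim_tendsto_pos_mult_at_top[OF inv _ diff]) (use A D in simp)
  then have "filterlim g at_top sequentially"
    unfolding g_def by (simp add: divide_inverse_commute)
  then have "filterlim (\<lambda>N. g N - 1) at_top sequentially"
    using filterlim_tendsto_add_at_top[OF tendsto_const[of "- 1"]] by simp
  moreover have "\<forall>\<^sub>F N in sequentially. 0 < L N"
    using order_tendstoD(1)[OF q A] by eventually_elim (auto intro: Nat.gr0I)
  with pos have "\<forall>\<^sub>F N in sequentially.
      g N - 1 \<le> real (nat \<lfloor>b N / (real (n N) / s N)\<rfloor> div nat \<lceil>D * real (L N) ^ 2 / real (n N)\<rceil>)"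
  proof eventually_elim
    case (elim N)
    define c where "c = real (n N) / s N"
    have c: "0 < c"
      using elim by (simp add: c_def)
    have "b N / c - 1 = (b N - c) / c"
      using c by (simp add: field_simps)
    moreover have "D * real (L N) ^ 2 / real (n N) + 1 = (D * (real (L N) ^ 2 / s N) + c) / c"
      using elim by (simp add: c_def field_simps)
    ultimately have "g N = (b N / c - 1) / (D * real (L N) ^ 2 / real (n N) + 1)"
      using c by (simp add: g_def flip: c_def)
    then show ?case
      unfolding c_def using elim D by (simp add: nat_floor_div_nat_ceiling_ge)
  qed
  ultimately show ?thesis
    by (simp add: filterlim_sequentially_iff_filterlim_real filterlim_at_top_mono)
qed

lemma prob_exit_index_scaled_outside_tendsto_0:
  fixes n L :: "nat \<Rightarrow> nat" and s e b :: "nat \<Rightarrow> real" and A :: real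
  assumes q: "(\<lambda>N. real (L N) ^ 2 / s N) \<longlonglongrightarrow> A" and A: "0 < A"
    and c: "(\<lambda>N. real (n N) / s N) \<longlonglongrightarrow> 0"
    and e: "e \<longlonglongrightarrow> 0" and b: "filterlim b at_top sequentially"
    and pos: "\<forall>\<^sub>F N in sequentially. 0 < n N \<and> 0 < s N \<and> 0 \<le> e N"
  shows "(\<lambda>N. measure (walk_space :: (int^'d::finite) stream measure)
      {\<omega> \<in> space walk_space. ereal_of_enat (exit_index (n N) (L N) \<omega>) * ereal (real (n N) / s N) < ereal (e N)
        \<or> ereal_of_enat (exit_index (n N) (L N) \<omega>) * ereal (real (n N) / s N) > ereal (b N)})
    \<longlonglongrightarrow> 0"
proof -
  define k where "k N = nat \<lfloor>b N / (real (n N) / s N)\<rfloor> div nat \<lceil>4 * real CARD('d) * real (L N) ^ 2 / real (n N)\<rceil>" for N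
  define bound where "bound N = e N / (2 * (real (L N) ^ 2 / s N)) + (31 / 32) ^ k N" for N
  have "\<forall>\<^sub>F N in sequentially. 0 < L N"
    using order_tendstoD(1)[OF q A] by eventually_elim (auto intro: Nat.gr0I)
  moreover have "\<forall>\<^sub>F N in sequentially. 0 \<le> b N"
    using b by (simp add: filterlim_at_top)
  ultimately have le_bound: "\<forall>\<^sub>F N in sequentially. measure (walk_space :: (int^'d) stream measure)
      {\<omega> \<in> space walk_space. ereal_of_enat (exit_index (n N) (L N) \<omega>) * ereal (real (n N) / s N) < ereal (e N)
        \<or> ereal_of_enat (exit_index (n N) (L N) \<omega>) * ereal (real (n N) / s N) > ereal (b N)} \<le> bound N"
    using pos unfolding bound_def k_def
    by eventually_elim (rule prob_exit_index_scaled_outside_le_blocks; simp)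
  have "filterlim k at_top sequentially"
    unfolding k_def using pos
    by (intro filterlim_exit_blocks_at_top[OF q A _ c b]) (auto elim: eventually_mono)
  then have "(\<lambda>N. (31 / 32 :: real) ^ k N) \<longlonglongrightarrow> 0"
    by (intro filterlim_compose[OF LIMSEQ_power_zero]) simp_all
  moreover have "(\<lambda>N. e N / (2 * (real (L N) ^ 2 / s N))) \<longlonglongrightarrow> 0"
    using tendsto_divide[OF e tendsto_mult[OF tendsto_const q, of 2]] A by simp
  ultimately have bound: "bound \<longlonglongrightarrow> 0"
    unfolding bound_def using tendsto_add[where a = 0 and b = 0] by simp
  show ?thesis
    by (rule real_tendsto_sandwich[OF always_eventually le_bound tendsto_const bound])
      (simp add: measure_nonneg)
qed

lemma filterlim_real_nat_floor_powr:
  fixes \<delta> :: real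
  assumes "0 < \<delta>"
  shows "filterlim (\<lambda>N::nat. real (nat \<lfloor>real N powr \<delta>\<rfloor>)) at_top sequentially"
proof (rule filterlim_at_top_mono)
  show "filterlim (\<lambda>N::nat. real N powr \<delta> - 1) at_top sequentially"
    using assms by real_asymp
  show "\<forall>\<^sub>F N in sequentially. real N powr \<delta> - 1 \<le> real (nat \<lfloor>real N powr \<delta>\<rfloor>)"
    by (intro always_eventually allI) linarith
qed

lemma nat_floor_powr_div_power_tendsto_0:
  fixes \<delta> :: real
  assumes "\<delta> < real D"
  shows "(\<lambda>N. real (nat \<lfloor>real N powr \<delta>\<rfloor>) / real N ^ D) \<longlonglongrightarrow> 0"
proof (rule real_tendsto_sandwich[OF always_eventually _ tendsto_const])
  show "\<forall>\<^sub>F N in sequentially. real (nat \<lfloor>real N powr \<delta>\<rfloor>) / real N ^ D \<le> real N powr (\<delta> - real D)"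
  proof (intro eventually_sequentiallyI)
    fix N :: nat assume "1 \<le> N"
    then have "real (nat \<lfloor>real N powr \<delta>\<rfloor>) / real N ^ D \<le> real N powr \<delta> / real N ^ D"
      by (intro divide_right_mono) simp_all
    also have "\<dots> = real N powr (\<delta> - real D)"
      using \<open>1 \<le> N\<close> by (simp add: powr_diff powr_realpow)
    finally show "real (nat \<lfloor>real N powr \<delta>\<rfloor>) / real N ^ D \<le> real N powr (\<delta> - real D)" .
  qed
  show "(\<lambda>N. real N powr (\<delta> - real D)) \<longlonglongrightarrow> 0"
    using assms by (intro tendsto_neg_powr filterlim_real_sequentially) simp
qed simp

theorem mainTheorem4:
  fixes m :: "nat \<Rightarrow> nat" and A \<delta> :: real
  assumes d3: "CARD('d::finite) \<ge> 3"
    and A_pos: "0 < A"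
    and lim: "(\<lambda>N. real (m N * N) ^ 2 / real N ^ CARD('d)) \<longlonglongrightarrow> A"
    and delta_lo: "2 < \<delta>" and delta_hi: "\<delta> < real CARD('d)"
  shows "(\<lambda>N. let L = m N * N; n = nat \<lfloor>real N powr \<delta>\<rfloor> in
           measure (walk_space :: (int ^ 'd) stream measure)
             {\<omega> \<in> space walk_space.
                ereal_of_enat (exit_index n L \<omega>) * ereal (real n / real N ^ CARD('d))
                  < ereal (1 / sqrt (ln (ln (real n))))
              \<or> ereal_of_enat (exit_index n L \<omega>) * ereal (real n / real N ^ CARD('d))
                  > ereal (ln (real N))})
         \<longlonglongrightarrow> 0"
proof -
  have n: "filterlim (\<lambda>N. real (nat \<lfloor>real N powr \<delta>\<rfloor>)) at_top sequentially"
    using delta_lo by (intro filterlim_real_nat_floor_powr) simp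
  have "((\<lambda>x::real. 1 / sqrt (ln (ln x))) \<longlongrightarrow> 0) at_top"
    by real_asymp
  from this n have e: "(\<lambda>N. 1 / sqrt (ln (ln (real (nat \<lfloor>real N powr \<delta>\<rfloor>))))) \<longlonglongrightarrow> 0"
    by (rule filterlim_compose)
  have "\<forall>\<^sub>F x in at_top. 0 < 1 / sqrt (ln (ln (x::real)))"
    by real_asymp
  then have e_pos: "\<forall>\<^sub>F x in at_top. 0 < x \<and> 0 \<le> 1 / sqrt (ln (ln (x::real)))"
    using eventually_gt_at_top[of 0] by eventually_elim simp
  have b: "filterlim (\<lambda>N. ln (real N)) at_top sequentially"
    by real_asymp
  have "\<forall>\<^sub>F N in sequentially. 0 < nat \<lfloor>real N powr \<delta>\<rfloor> \<and> 0 < real N ^ CARD('d)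
      \<and> 0 \<le> 1 / sqrt (ln (ln (real (nat \<lfloor>real N powr \<delta>\<rfloor>))))"
    using eventually_compose_filterlim[OF e_pos n] eventually_gt_at_top[of 0]
    by eventually_elim simp
  with prob_exit_index_scaled_outside_tendsto_0[OF lim A_pos
      nat_floor_powr_div_power_tendsto_0[OF delta_hi] e b]
  show ?thesis
    by (simp add: Let_def)
qed

end
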